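(* With the setting in the context, the set of vectors $\{\mathcal A_0|f\rangle : f\in\ker(\delta^0)\}$ is a basis of the ground state subspace $\mathcal H_0$. Moreover, for $f,g\in\ker(\delta^0)$ one has $\mathcal A_0|f\rangle=\mathcal A_0|g\rangle$ if and only if $f-g\in\mathrm{im}(\delta^{-1})$, so that $[f]\mapsto\mathcal A_0|f\rangle$ is a well-defined bijection from $H^0(C,G)=\ker\delta^0/\mathrm{im}\,\delta^{-1}$ onto this basis.
   Context: $(C_\bullet,\partial^C_\bullet)$ is a chain complex with each $C_n$ free abelian on a finite set $K_n$, $K_n\ne\emptyset$ for finitely many $n$; $(G_\bullet,\partial^G_\bullet)$ is a chain complex of finite abelian groups. $\mathrm{hom}(C,G)^p=\prod_n\mathrm{Hom}(C_n,G_{n-p})$ with $(\delta^pf)_n=f_{n-1}\partial^C_n-(-1)^p\partial^G_{n-p}f_n$. $\mathrm{hom}(C,G)_p=\mathrm{Hom}(\mathrm{hom}(C,G)^p,U(1))$ (written additively), $\chi_m(f)=m(f)$, $\delta_{p+1}m=m\circ\delta^p$. $\mathcal H=\bigotimes_n\bigotimes_{x\in K_n}\mathbb C[G_n]$ with orthonormal basis $|f\rangle$, $f\in\mathrm{hom}(C,G)^0$. $P_t|f\rangle=|f+t\rangle$, $Q_m|f\rangle=\chi_m(f)|f\rangle$; $A_t=P_{\delta^{-1}t}$ ($t\in\mathrm{hom}(C,G)^{-1}$), $B_m=Q_{\delta_1m}$ ($m\in\mathrm{hom}(C,G)_1$). $\mathcal A_0=\frac1{|\mathrm{hom}(C,G)^{-1}|}\sum_{t}A_t$.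 Local elements: for $x\in K_n$, $g\in G_{n-p}$, $gx^*\in\mathrm{hom}(C,G)^p$ has $n$-th component sending $x\mapsto g$ and other basis elements to $0$, other components $0$; for $r\in\mathrm{Hom}(G_{n-p},U(1))$, $rx_*(f)=r(f_n(x))$. $A_x^0=\frac1{|G_{n+1}|}\sum_{h\in G_{n+1}}A_{hx^*}$, $B_x^0=\frac1{|G_{n-1}|}\sum_{r\in\mathrm{Hom}(G_{n-1},U(1))}B_{rx_*}$ for $x\in K_n$; the ground state subspace is $\mathcal H_0=\{\Psi: A_x^0\Psi=B_x^0\Psi=\Psi\ \forall n,\forall x\in K_n\}$. *)

theory Defs
  imports Complex_Main "HOL-Library.Function_Algebras"
begin

text \<open>Chain complex C: free abelian on a finite set X of basis cells; deg x = n means x in K_n.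
  dC x y is the coefficient of y in the boundary of x.
  Coefficient complex G: subgroups Gc n of an ambient abelian group, with boundaries dG n : G_n -> G_(n-1).\<close>

definition zsmult :: "int \<Rightarrow> 'g::ab_group_add \<Rightarrow> 'g" where
  "zsmult k a = (if 0 \<le> k then (\<Sum>i<nat k. a) else - (\<Sum>i<nat (-k). a))"

definition chain_complex_C :: "'x set \<Rightarrow> ('x \<Rightarrow> int) \<Rightarrow> ('x \<Rightarrow> 'x \<Rightarrow> int) \<Rightarrow> bool" where
  "chain_complex_C X deg dC \<longleftrightarrow> finite X \<and>
     (\<forall>x y. dC x y \<noteq> 0 \<longrightarrow> x \<in> X \<and> y \<in> X \<and> deg y = deg x - 1) \<and>
     (\<forall>x z. (\<Sum>y\<in>X. dC x y * dC y z) = 0)"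

definition finite_subgroup :: "'g::ab_group_add set \<Rightarrow> bool" where
  "finite_subgroup S \<longleftrightarrow> finite S \<and> 0 \<in> S \<and> (\<forall>a\<in>S. \<forall>b\<in>S. a + b \<in> S) \<and> (\<forall>a\<in>S. - a \<in> S)"

definition chain_complex_G :: "(int \<Rightarrow> 'g::ab_group_add set) \<Rightarrow> (int \<Rightarrow> 'g \<Rightarrow> 'g) \<Rightarrow> bool" where
  "chain_complex_G Gc dG \<longleftrightarrow> (\<forall>n. finite_subgroup (Gc n)) \<and>
     (\<forall>n. \<forall>a\<in>Gc n. dG n a \<in> Gc (n - 1)) \<and>
     (\<forall>n. \<forall>a\<in>Gc n. \<forall>b\<in>Gc n. dG n (a + b) = dG n a + dG n b) \<and>
     (\<forall>n. \<forall>a\<in>Gc n. dG (n - 1) (dG n a) = 0)"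

text \<open>hom(C,G)^p: an element is a function on the basis cells, f x \<in> G_(deg x - p), zero off X.\<close>
definition cochains :: "'x set \<Rightarrow> ('x \<Rightarrow> int) \<Rightarrow> (int \<Rightarrow> 'g::ab_group_add set) \<Rightarrow> int \<Rightarrow> ('x \<Rightarrow> 'g) set" where
  "cochains X deg Gc p = {f. (\<forall>x\<in>X. f x \<in> Gc (deg x - p)) \<and> (\<forall>x. x \<notin> X \<longrightarrow> f x = 0)}"

text \<open>(\<delta>^p f)_n = f_(n-1) \<partial>^C_n - (-1)^p \<partial>^G_(n-p) f_n\<close>
definition coboundary :: "'x set \<Rightarrow> ('x \<Rightarrow> int) \<Rightarrow> ('x \<Rightarrow> 'x \<Rightarrow> int) \<Rightarrow> (int \<Rightarrow> 'g::ab_group_add \<Rightarrow> 'g)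
    \<Rightarrow> int \<Rightarrow> ('x \<Rightarrow> 'g) \<Rightarrow> ('x \<Rightarrow> 'g)" where
  "coboundary X deg dC dG p f = (\<lambda>x. if x \<in> X then
      (\<Sum>y\<in>X. zsmult (dC x y) (f y))
        - (if even p then dG (deg x - p) (f x) else - dG (deg x - p) (f x))
     else 0)"

text \<open>Characters (with values in U(1) as unit complex numbers); extended by 1 off the group.\<close>
definition characters :: "'a::ab_group_add set \<Rightarrow> ('a \<Rightarrow> complex) set" where
  "characters S = {r. (\<forall>a\<in>S. \<forall>b\<in>S. r (a + b) = r a * r b) \<and> (\<forall>a\<in>S. cmod (r a) = 1)
                      \<and> (\<forall>a. a \<notin> S \<longrightarrow> r a = 1)}"

text \<open>Hilbert space: complex functions on hom(C,G)^0; ket f is the basis vector |f>.\<close>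
type_synonym ('x, 'g) state = "('x \<Rightarrow> 'g) \<Rightarrow> complex"

definition Hspace :: "('x \<Rightarrow> 'g) set \<Rightarrow> ('x, 'g) state set" where
  "Hspace C0 = {\<Psi>. \<forall>f. f \<notin> C0 \<longrightarrow> \<Psi> f = 0}"

definition ket :: "('x \<Rightarrow> 'g) \<Rightarrow> ('x, 'g) state" where
  "ket f = (\<lambda>g. if g = f then 1 else 0)"

definition cscale :: "complex \<Rightarrow> ('x, 'g) state \<Rightarrow> ('x, 'g) state" where
  "cscale c \<Psi> = (\<lambda>f. c * \<Psi> f)"

text \<open>P_t |f> = |f + t>\<close>
definition Pop :: "('x \<Rightarrow> 'g::ab_group_add) \<Rightarrow> ('x, 'g) state \<Rightarrow> ('x, 'g) state" where
  "Pop t \<Psi> = (\<lambda>f. \<Psi> (\<lambda>x. f x - t x))"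

definition Qop :: "(('x \<Rightarrow> 'g) \<Rightarrow> complex) \<Rightarrow> ('x, 'g) state \<Rightarrow> ('x, 'g) state" where
  "Qop m \<Psi> = (\<lambda>f. m f * \<Psi> f)"

definition Aop where
  "Aop X deg dC dG t = Pop (coboundary X deg dC dG (-1) t)"

text \<open>B_m = Q_(\<delta>_1 m), \<delta>_1 m = m \<circ> \<delta>^0\<close>
definition Bop where
  "Bop X deg dC dG m = Qop (\<lambda>f. m (coboundary X deg dC dG 0 f))"

definition A_total :: "'x set \<Rightarrow> ('x \<Rightarrow> int) \<Rightarrow> ('x \<Rightarrow> 'x \<Rightarrow> int) \<Rightarrow> (int \<Rightarrow> 'g::ab_group_add set)
    \<Rightarrow> (int \<Rightarrow> 'g \<Rightarrow> 'g) \<Rightarrow> ('x, 'g) state \<Rightarrow> ('x, 'g) state" where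
  "A_total X deg dC Gc dG \<Psi> = cscale (1 / of_nat (card (cochains X deg Gc (-1))))
      (\<Sum>t\<in>cochains X deg Gc (-1). Aop X deg dC dG t \<Psi>)"

text \<open>h x^* : the cochain sending x to h and everything else to 0; r x_* (f) = r (f x).\<close>
definition loc_cochain :: "'x \<Rightarrow> 'g::zero \<Rightarrow> ('x \<Rightarrow> 'g)" where
  "loc_cochain x h = (\<lambda>y. if y = x then h else 0)"

definition A_vertex where
  "A_vertex X deg dC Gc dG x \<Psi> = cscale (1 / of_nat (card (Gc (deg x + 1))))
      (\<Sum>h\<in>Gc (deg x + 1). Aop X deg dC dG (loc_cochain x h) \<Psi>)"

definition B_vertex where
  "B_vertex X deg dC Gc dG x \<Psi> = cscale (1 / of_nat (card (characters (Gc (deg x - 1)))))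
      (\<Sum>r\<in>characters (Gc (deg x - 1)). Bop X deg dC dG (\<lambda>f. r (f x)) \<Psi>)"

definition ground_space where
  "ground_space X deg dC Gc dG = {\<Psi> \<in> Hspace (cochains X deg Gc 0).
      \<forall>x\<in>X. A_vertex X deg dC Gc dG x \<Psi> = \<Psi> \<and> B_vertex X deg dC Gc dG x \<Psi> = \<Psi>}"

definition cocycles0 where
  "cocycles0 X deg dC Gc dG = {f \<in> cochains X deg Gc 0. coboundary X deg dC dG 0 f = (\<lambda>x. 0)}"

definition coboundaries0 where
  "coboundaries0 X deg dC Gc dG = coboundary X deg dC dG (-1) ` cochains X deg Gc (-1)"

text \<open>H^0(C,G) as the set of cosets f + im \<delta>^(-1), f \<in> ker \<delta>^0.\<close>
definition cohomology0 where
  "cohomology0 X deg dC Gc dG =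
     (\<lambda>f. (\<lambda>t. (\<lambda>x. f x + t x)) ` coboundaries0 X deg dC Gc dG) ` cocycles0 X deg dC Gc dG"

end

theory Submission
  imports Defs "HOL-Library.FuncSet"
begin

(* A_0 |f> averages the translates |f + delta t> over all t, and every coboundary is hit
   equally often, so A_0 |f> is a nonzero multiple of the indicator of the coset
   f + im delta^(-1). Indicators of distinct cosets have disjoint supports: they are linearly
   independent, and A_0 |f> = A_0 |g> exactly when the cosets agree.

   B_x^0 multiplies |f> by the average of all characters of G_(n-1) at (delta^0 f)(x); since
   characters of a finite abelian group separate points, this average is 1 iff
   (delta^0 f)(x) = 0. So the B-conditions say that a ground state is supported on cocycles.
   A_x^0 averages over the translations by the coboundaries of the local cochains h x^*, so
   the A-conditions say that it is invariant under these, and they generate im delta^(-1).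
   The ground states are therefore the functions on ker delta^0 that are constant on cosets
   of im delta^(-1), which is the span of the coset indicators. *)

section \<open>Integer multiples and finite subgroups\<close>

lemma sum_fun_apply: "(sum F A :: 'a \<Rightarrow> 'b::comm_monoid_add) x = (\<Sum>a\<in>A. F a x)"
  by (induct A rule: infinite_finite_induct) auto

lemma zsmult_0_left [simp]: "zsmult 0 a = 0"
  by (simp add: zsmult_def)

lemma zsmult_0_right [simp]: "zsmult k 0 = 0"
  by (simp add: zsmult_def)

lemma zsmult_1 [simp]: "zsmult 1 a = a"
  by (simp add: zsmult_def)

lemma zsmult_add_one: "zsmult (k + 1) a = zsmult k a + a"
proof (cases "0 \<le> k")
  case True
  then have "nat (k + 1) = Suc (nat k)" by simp
  with True show ?thesis by (simp add: zsmult_def add.commute)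
next
  case False
  then have "nat (- k) = Suc (nat (- (k + 1)))" by simp
  with False show ?thesis
    by (cases "k = -1") (simp_all add: zsmult_def)
qed

lemma zsmult_diff_one: "zsmult (k - 1) a = zsmult k a - a"
  using zsmult_add_one[of "k - 1" a] by (simp add: algebra_simps)

lemma zsmult_add_left: "zsmult (k + l) a = zsmult k a + zsmult l a"
proof (induct l rule: int_induct[where k = 0])
  case (step1 i)
  then show ?case using zsmult_add_one[of "k + i" a] zsmult_add_one[of i a]
    by (simp add: algebra_simps)
next
  case (step2 i)
  have "zsmult (k + (i - 1)) a = zsmult (k + i) a - a"
    using zsmult_diff_one[of "k + i" a] by (simp add: add_diff_eq)
  with step2 show ?case by (simp add: zsmult_diff_one)
qed simp

lemma zsmult_minus_left: "zsmult (- k) a = - zsmult k a"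
  using zsmult_add_left[of k "- k" a] by (simp add: eq_neg_iff_add_eq_0 add.commute)

lemma zsmult_diff_left: "zsmult (k - l) a = zsmult k a - zsmult l a"
  using zsmult_add_left[of k "- l" a] by (simp add: zsmult_minus_left)

lemma zsmult_add_right: "zsmult k (a + b) = zsmult k a + zsmult k b"
  by (induct k rule: int_induct[where k = 0])
    (simp_all add: zsmult_add_one zsmult_diff_one algebra_simps)

lemma zsmult_mult: "zsmult (k * l) a = zsmult k (zsmult l a)"
  by (induct k rule: int_induct[where k = 0])
    (simp_all add: distrib_right left_diff_distrib zsmult_add_left zsmult_diff_left
      zsmult_add_one zsmult_diff_one)

lemma zsmult_sum_right: "zsmult k (\<Sum>i\<in>A. f i) = (\<Sum>i\<in>A. zsmult k (f i))"
  by (induct A rule: infinite_finite_induct) (auto simp: zsmult_add_right)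

lemma zsmult_sum_left: "zsmult (\<Sum>i\<in>A. f i) a = (\<Sum>i\<in>A. zsmult (f i) a)"
  by (induct A rule: infinite_finite_induct) (auto simp: zsmult_add_left)

lemma finite_subgroup_diff: "finite_subgroup S \<Longrightarrow> a \<in> S \<Longrightarrow> b \<in> S \<Longrightarrow> a - b \<in> S"
  unfolding finite_subgroup_def by (metis diff_conv_add_uminus)

lemma finite_subgroup_sum:
  "finite_subgroup S \<Longrightarrow> (\<And>i. i \<in> A \<Longrightarrow> f i \<in> S) \<Longrightarrow> (\<Sum>i\<in>A. f i) \<in> S"
  unfolding finite_subgroup_def by (induct A rule: infinite_finite_induct) auto

lemma finite_subgroup_zsmult: "finite_subgroup S \<Longrightarrow> a \<in> S \<Longrightarrow> zsmult k a \<in> S"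
  by (induct k rule: int_induct[where k = 0])
    (auto simp: zsmult_add_one zsmult_diff_one finite_subgroup_diff finite_subgroup_def)

lemma finite_subgroup_torsion:
  assumes S: "finite_subgroup S" and g: "g \<in> S"
  shows "\<exists>k::nat. 0 < k \<and> k \<le> card S \<and> zsmult (int k) g = 0"
proof -
  have "\<not> inj_on (\<lambda>n::nat. zsmult (int n) g) {..card S}"
  proof
    assume "inj_on (\<lambda>n::nat. zsmult (int n) g) {..card S}"
    then have "card {..card S} \<le> card S"
      using S g by (intro card_inj_on_le) (auto simp: finite_subgroup_zsmult finite_subgroup_def)
    then show False by simp
  qed
  then obtain i j where ij: "i < j" "j \<le> card S" "zsmult (int i) g = zsmult (int j) g"
    unfolding inj_on_def by (metis atMost_iff linorder_neqE_nat)
  then have "zsmult (int (j - i)) g = 0"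
    by (simp add: zsmult_diff_left)
  with ij show ?thesis by (intro exI[of _ "j - i"]) auto
qed

lemma additive_on_zero:
  fixes \<phi> :: "'a::ab_group_add \<Rightarrow> 'b::ab_group_add"
  assumes "finite_subgroup S" and "\<And>x y. x \<in> S \<Longrightarrow> y \<in> S \<Longrightarrow> \<phi> (x + y) = \<phi> x + \<phi> y"
  shows "\<phi> 0 = 0"
proof -
  have "0 \<in> S" using assms(1) by (simp add: finite_subgroup_def)
  then have "\<phi> (0 + 0) = \<phi> 0 + \<phi> 0" by (intro assms(2))
  then show ?thesis by simp
qed

lemma additive_on_zsmult:
  fixes \<phi> :: "'a::ab_group_add \<Rightarrow> 'b::ab_group_add"
  assumes S: "finite_subgroup S" and a: "a \<in> S"
    and add: "\<And>x y. x \<in> S \<Longrightarrow> y \<in> S \<Longrightarrow> \<phi> (x + y) = \<phi> x + \<phi> y"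
  shows "\<phi> (zsmult k a) = zsmult k (\<phi> a)"
proof (induct k rule: int_induct[where k = 0])
  case base
  show ?case using additive_on_zero[of S \<phi>] S add by simp
next
  case (step1 i)
  then show ?case
    by (simp only: zsmult_add_one add[OF finite_subgroup_zsmult[OF S a] a])
next
  case (step2 i)
  have "\<phi> (zsmult (i - 1) a + a) = \<phi> (zsmult (i - 1) a) + \<phi> a"
    using S a by (intro add finite_subgroup_zsmult)
  with step2 show ?case by (simp add: zsmult_diff_one eq_diff_eq)
qed

lemma additive_on_sum:
  fixes \<phi> :: "'a::ab_group_add \<Rightarrow> 'b::ab_group_add"
  assumes S: "finite_subgroup S" and f: "\<And>i. i \<in> A \<Longrightarrow> f i \<in> S"
    and add: "\<And>x y. x \<in> S \<Longrightarrow> y \<in> S \<Longrightarrow> \<phi> (x + y) = \<phi> x + \<phi> y"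
  shows "\<phi> (\<Sum>i\<in>A. f i) = (\<Sum>i\<in>A. \<phi> (f i))"
  using f
proof (induct A rule: infinite_finite_induct)
  case (insert x F)
  then have "\<phi> (f x + (\<Sum>i\<in>F. f i)) = \<phi> (f x) + \<phi> (\<Sum>i\<in>F. f i)"
    by (intro add finite_subgroup_sum[OF S]) auto
  with insert show ?case by simp
qed (use additive_on_zero[of S \<phi>] S add in simp_all)

section \<open>Characters of finite abelian groups\<close>

definition character_on :: "'g::ab_group_add set \<Rightarrow> ('g \<Rightarrow> complex) \<Rightarrow> bool" where
  "character_on H r \<longleftrightarrow> (\<forall>a\<in>H. \<forall>b\<in>H. r (a + b) = r a * r b) \<and> (\<forall>a\<in>H. cmod (r a) = 1)"

lemma characters_iff: "r \<in> characters S \<longleftrightarrow> character_on S r \<and> (\<forall>a. a \<notin> S \<longrightarrow> r a = 1)"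
  by (auto simp: characters_def character_on_def)

lemma character_on_zero:
  assumes "finite_subgroup H" and "character_on H r"
  shows "r 0 = 1"
proof -
  have "r (0 + 0) = r 0 * r 0" "cmod (r 0) = 1"
    using assms by (auto simp: character_on_def finite_subgroup_def)
  then show ?thesis by (metis add_0 mult_cancel_left1 norm_zero zero_neq_one)
qed

lemma character_on_uminus:
  assumes H: "finite_subgroup H" and r: "character_on H r" and a: "a \<in> H"
  shows "r (- a) = inverse (r a)"
proof -
  have "- a \<in> H" using H a by (simp add: finite_subgroup_def)
  then have "r a * r (- a) = 1"
    using r a character_on_zero[OF H r] by (metis character_on_def add.right_inverse)
  then show ?thesis by (rule inverse_unique[symmetric])
qed

lemma character_on_zsmult:
  assumes H: "finite_subgroup H" and r: "character_on H r" and a: "a \<in> H"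
  shows "r (zsmult k a) = r a powi k"
proof (induct k rule: int_induct[where k = 0])
  case base
  then show ?case using character_on_zero[OF H r] by simp
next
  case (step1 i)
  have "r (zsmult i a + a) = r (zsmult i a) * r a"
    using r a finite_subgroup_zsmult[OF H a] by (simp add: character_on_def)
  moreover have "r a \<noteq> 0" using r a by (auto simp: character_on_def)
  ultimately show ?case using step1 by (simp add: zsmult_add_one power_int_add_1)
next
  case (step2 i)
  have "- a \<in> H" using H a by (simp add: finite_subgroup_def)
  then have "r (zsmult i a - a) = r (zsmult i a) * r (- a)"
    using r finite_subgroup_zsmult[OF H a] unfolding character_on_def diff_conv_add_uminus by blast
  moreover have "r a \<noteq> 0" using r a by (auto simp: character_on_def)
  ultimately show ?case using step2 character_on_uminus[OF H r a]
    by (simp add: zsmult_diff_one power_int_diff divide_inverse)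
qed

lemma unimodular_root:
  assumes "cmod z = 1" and "0 < m"
  shows "\<exists>w::complex. w ^ m = z"
proof -
  have "z \<noteq> 0" using assms(1) by auto
  then have "cis (Arg z) = z" using assms(1) cis_Arg[of z] by (simp add: sgn_eq)
  moreover have "cis (Arg z / m) ^ m = cis (Arg z)" using assms by (simp add: DeMoivre)
  ultimately show ?thesis by metis
qed

lemma nontrivial_root_of_unity:
  assumes "1 < m"
  shows "\<exists>w::complex. w ^ m = 1 \<and> w \<noteq> 1"
proof -
  let ?root = "\<lambda>k::nat. cis (2 * pi * real k / real m)"
  have "inj_on ?root {..<m}"
    using bij_betw_roots_unity[of m] assms by (simp add: bij_betw_def)
  then have "?root 1 \<noteq> ?root 0" using assms by (metis inj_on_eq_iff lessThan_iff less_one one_neq_zero less_trans)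
  moreover have "?root 1 ^ m = 1" using assms by (simp add: DeMoivre)
  ultimately show ?thesis by (intro exI[of _ "?root 1"]) simp
qed

definition adjoin :: "'g::ab_group_add set \<Rightarrow> 'g \<Rightarrow> 'g set" where
  "adjoin H g = {h + zsmult k g | h k. h \<in> H}"

lemma adjoin_subgroup:
  assumes H: "finite_subgroup H" and S: "finite_subgroup S" and HS: "H \<subseteq> S" and g: "g \<in> S"
  shows "finite_subgroup (adjoin H g)" "adjoin H g \<subseteq> S" "H \<subseteq> adjoin H g" "g \<in> adjoin H g"
proof -
  show sub: "adjoin H g \<subseteq> S"
    using HS finite_subgroup_zsmult[OF S g] S by (auto simp: adjoin_def finite_subgroup_def)
  show "H \<subseteq> adjoin H g" unfolding adjoin_def by (force intro: exI[of _ 0])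
  show "g \<in> adjoin H g" unfolding adjoin_def using H
    by (auto simp: finite_subgroup_def intro!: exI[of _ 0] exI[of _ 1])
  show "finite_subgroup (adjoin H g)" unfolding finite_subgroup_def
  proof (intro conjI ballI)
    show "finite (adjoin H g)" using sub S by (auto simp: finite_subgroup_def intro: finite_subset)
    show "0 \<in> adjoin H g" unfolding adjoin_def using H
      by (auto simp: finite_subgroup_def intro!: exI[of _ 0])
  next
    fix a b assume "a \<in> adjoin H g" "b \<in> adjoin H g"
    then obtain h1 k1 h2 k2 where "h1 \<in> H" "a = h1 + zsmult k1 g" "h2 \<in> H" "b = h2 + zsmult k2 g"
      by (auto simp: adjoin_def)
    then have "a + b = (h1 + h2) + zsmult (k1 + k2) g" "h1 + h2 \<in> H"
      using H by (auto simp: zsmult_add_left finite_subgroup_def algebra_simps)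
    then show "a + b \<in> adjoin H g" unfolding adjoin_def by blast
  next
    fix a assume "a \<in> adjoin H g"
    then obtain h k where "h \<in> H" "a = h + zsmult k g" by (auto simp: adjoin_def)
    then have "- a = (- h) + zsmult (- k) g" "- h \<in> H"
      using H by (auto simp: zsmult_minus_left finite_subgroup_def algebra_simps)
    then show "- a \<in> adjoin H g" unfolding adjoin_def by blast
  qed
qed

lemma least_multiple_in_subgroup:
  assumes H: "finite_subgroup H" and S: "finite_subgroup S" and g: "g \<in> S"
  obtains m where "0 < m" "zsmult (int m) g \<in> H" "\<And>j. 0 < j \<Longrightarrow> j < m \<Longrightarrow> zsmult (int j) g \<notin> H"
proof -
  obtain k :: nat where "0 < k" "zsmult (int k) g = 0" using finite_subgroup_torsion[OF S g] by blast
  then have "0 < k \<and> zsmult (int k) g \<in> H" using H by (simp add: finite_subgroup_def)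
  then have "0 < (LEAST m. 0 < m \<and> zsmult (int m) g \<in> H) \<and>
      zsmult (int (LEAST m. 0 < m \<and> zsmult (int m) g \<in> H)) g \<in> H"
    by (rule LeastI)
  with not_less_Least[of _ "\<lambda>m. 0 < m \<and> zsmult (int m) g \<in> H"] show ?thesis
    using that by blast
qed

text \<open>If \<open>m\<close> is least with \<open>m g \<in> H\<close>, then \<open>k g \<in> H\<close> forces \<open>m\<close> to divide \<open>k\<close>,
  so prescribing \<open>r' g = w\<close> with \<open>w ^ m = r (m g)\<close> is consistent with \<open>r\<close>.\<close>

lemma character_on_multiples:
  assumes H: "finite_subgroup H" and r: "character_on H r"
    and m: "0 < m" "zsmult (int m) g \<in> H" "\<And>j. 0 < j \<Longrightarrow> j < m \<Longrightarrow> zsmult (int j) g \<notin> H"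
    and w: "w ^ m = r (zsmult (int m) g)"
    and k: "zsmult k g \<in> H"
  shows "r (zsmult k g) = w powi k"
proof -
  define q where "q = k div int m"
  define s where "s = k mod int m"
  have k_eq: "k = q * int m + s" and s: "0 \<le> s" "s < int m"
    using m(1) unfolding q_def s_def by auto
  have zs: "zsmult k g = zsmult q (zsmult (int m) g) + zsmult s g"
    unfolding k_eq by (simp add: zsmult_add_left zsmult_mult)
  then have "zsmult (int (nat s)) g \<in> H"
    using s k finite_subgroup_zsmult[OF H m(2)] finite_subgroup_diff[OF H]
    by (metis add_diff_cancel_left' int_nat_eq)
  then have "s = 0" using m(3)[of "nat s"] s by linarith
  then have "r (zsmult k g) = r (zsmult (int m) g) powi q"
    using zs character_on_zsmult[OF H r m(2)] by simp
  also have "\<dots> = (w powi int m) powi q" using w by simp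
  also have "\<dots> = w powi (int m * q)" by (rule power_int_mult[symmetric])
  also have "\<dots> = w powi k" using \<open>s = 0\<close> k_eq by (simp add: mult.commute)
  finally show ?thesis .
qed

lemma character_extend_adjoin:
  assumes H: "finite_subgroup H" and r: "character_on H r"
    and m: "0 < m" "zsmult (int m) g \<in> H" "\<And>j. 0 < j \<Longrightarrow> j < m \<Longrightarrow> zsmult (int j) g \<notin> H"
    and w: "w ^ m = r (zsmult (int m) g)"
  obtains r' where "character_on (adjoin H g) r'" "\<And>a. a \<in> H \<Longrightarrow> r' a = r a" "r' g = w"
proof -
  have "cmod (w ^ m) = 1" using w m r by (simp add: character_on_def)
  then have "cmod w ^ m = 1" by (simp add: norm_power)
  then have "cmod w ^ m = 1 ^ m" by simp
  then have nw: "cmod w = 1" by (rule power_eq_imp_eq_base) (use m(1) in auto)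
  then have w0: "w \<noteq> 0" by auto
  have consistent: "r h * w powi k = r h' * w powi k'"
    if hh': "h \<in> H" "h' \<in> H" and eq: "h + zsmult k g = h' + zsmult k' g" for h h' k k'
  proof -
    have e: "zsmult (k - k') g = h' - h" using eq by (simp add: zsmult_diff_left algebra_simps)
    have "zsmult (k - k') g \<in> H" unfolding e by (rule finite_subgroup_diff[OF H hh'(2,1)])
    then have "r (zsmult (k - k') g) = w powi (k - k')"
      using m(3) by (intro character_on_multiples[OF H r m(1,2) _ w])
    then have "r (h' - h) = w powi (k - k')" by (simp only: e)
    moreover have "r h' = r h * r (h' - h)"
      using r hh' finite_subgroup_diff[OF H, of h' h] by (metis character_on_def add.commute diff_add_cancel)
    ultimately show ?thesis using w0 by (simp add: power_int_diff)
  qed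
  define r' where "r' y = (SOME c. \<exists>h k. h \<in> H \<and> y = h + zsmult k g \<and> c = r h * w powi k)" for y
  have r'_eq: "r' (h + zsmult k g) = r h * w powi k" if "h \<in> H" for h k
  proof -
    have "\<exists>h' k'. h' \<in> H \<and> h + zsmult k g = h' + zsmult k' g \<and> r' (h + zsmult k g) = r h' * w powi k'"
      unfolding r'_def by (rule someI_ex) (use that in blast)
    then show ?thesis using consistent that by metis
  qed
  show ?thesis
  proof
    show "character_on (adjoin H g) r'" unfolding character_on_def
    proof (intro conjI ballI)
      fix a b assume "a \<in> adjoin H g" "b \<in> adjoin H g"
      then obtain h1 k1 h2 k2 where hk: "h1 \<in> H" "a = h1 + zsmult k1 g" "h2 \<in> H" "b = h2 + zsmult k2 g"
        by (auto simp: adjoin_def)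
      then have "a + b = (h1 + h2) + zsmult (k1 + k2) g" "h1 + h2 \<in> H"
        using H by (auto simp: zsmult_add_left finite_subgroup_def algebra_simps)
      then have "r' (a + b) = r (h1 + h2) * w powi (k1 + k2)" using r'_eq by simp
      also have "\<dots> = (r h1 * w powi k1) * (r h2 * w powi k2)"
        using r hk w0 by (simp add: character_on_def power_int_add)
      finally show "r' (a + b) = r' a * r' b" using hk r'_eq by simp
    next
      fix a assume "a \<in> adjoin H g"
      then obtain h k where "h \<in> H" "a = h + zsmult k g" by (auto simp: adjoin_def)
      then show "cmod (r' a) = 1" using r'_eq r nw by (simp add: character_on_def norm_mult norm_power_int)
    qed
    show "r' a = r a" if "a \<in> H" for a using r'_eq[OF that, of 0] by simp
    show "r' g = w"
      using r'_eq[of 0 1] H character_on_zero[OF H r] by (simp add: finite_subgroup_def)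
  qed
qed

lemma character_extend:
  assumes S: "finite_subgroup S"
  shows "finite_subgroup H \<Longrightarrow> H \<subseteq> S \<Longrightarrow> character_on H r
    \<Longrightarrow> \<exists>r'. character_on S r' \<and> (\<forall>a\<in>H. r' a = r a)"
proof (induct "card (S - H)" arbitrary: H r rule: less_induct)
  case less
  show ?case
  proof (cases "H = S")
    case True
    then show ?thesis using less by blast
  next
    case False
    then obtain g where g: "g \<in> S" "g \<notin> H" using less(3) by blast
    obtain m where m: "0 < m" "zsmult (int m) g \<in> H" "\<And>j. 0 < j \<Longrightarrow> j < m \<Longrightarrow> zsmult (int j) g \<notin> H"
      using least_multiple_in_subgroup[OF less(2) S g(1)] by blast
    have "cmod (r (zsmult (int m) g)) = 1" using less(4) m(2) by (simp add: character_on_def)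
    then obtain w where "w ^ m = r (zsmult (int m) g)" using unimodular_root m(1) by blast
    then obtain r1 where r1: "character_on (adjoin H g) r1" "\<And>a. a \<in> H \<Longrightarrow> r1 a = r a"
      using character_extend_adjoin[OF less(2,4) m] by blast
    note adj = adjoin_subgroup[OF less(2) S less(3) g(1)]
    have "S - adjoin H g \<subset> S - H" using adj g by blast
    then have "card (S - adjoin H g) < card (S - H)"
      using S by (intro psubset_card_mono) (auto simp: finite_subgroup_def)
    then obtain r2 where "character_on S r2" "\<forall>a\<in>adjoin H g. r2 a = r1 a"
      using less(1)[OF _ adj(1,2) r1(1)] by blast
    then show ?thesis using r1 adj(3) by (metis subsetD)
  qed
qed

lemma characters_separate:
  assumes S: "finite_subgroup S" and a: "a \<in> S" "a \<noteq> 0"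
  obtains r where "r \<in> characters S" "r a \<noteq> 1"
proof -
  have triv: "finite_subgroup {0::'a}" "{0} \<subseteq> S" using S by (auto simp: finite_subgroup_def)
  obtain m where m: "0 < m" "zsmult (int m) a \<in> {0}" "\<And>j. 0 < j \<Longrightarrow> j < m \<Longrightarrow> zsmult (int j) a \<notin> {0}"
    using least_multiple_in_subgroup[OF triv(1) S a(1)] by blast
  have "m \<noteq> 1" using m(2) a(2) by auto
  with m(1) have "1 < m" by simp
  then obtain w :: complex where w: "w ^ m = 1" "w \<noteq> 1" using nontrivial_root_of_unity by blast
  have "character_on {0} (\<lambda>_. 1)" by (simp add: character_on_def)
  then obtain r1 where r1: "character_on (adjoin {0} a) r1" "r1 a = w"
    using character_extend_adjoin[OF triv(1) _ m, of "\<lambda>_. 1" w] w(1) by auto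
  note adj = adjoin_subgroup[OF triv(1) S triv(2) a(1)]
  obtain r2 where r2: "character_on S r2" "\<forall>b\<in>adjoin {0} a. r2 b = r1 b"
    using character_extend[OF S adj(1,2) r1(1)] by blast
  show ?thesis
  proof
    show "(\<lambda>b. if b \<in> S then r2 b else 1) \<in> characters S"
      using r2(1) S by (auto simp: characters_iff character_on_def finite_subgroup_def)
    show "(if a \<in> S then r2 a else 1) \<noteq> 1" using r2(2) adj(4) r1(2) w(2) a(1) by simp
  qed
qed

lemma one_in_characters: "(\<lambda>_. 1) \<in> characters S"
  by (simp add: characters_def)

lemma characters_finite:
  assumes S: "finite_subgroup S"
  shows "finite (characters S)"
proof -
  define R where "R = (\<Union>k\<in>{1..card S}. {z::complex. z ^ k = 1})"
  have "finite R" unfolding R_def by (auto intro: finite_roots_unity)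
  have unit_values: "r a \<in> R" if r: "r \<in> characters S" and a: "a \<in> S" for r a
  proof -
    have ch: "character_on S r" using r by (simp add: characters_iff)
    obtain k where k: "0 < k" "k \<le> card S" "zsmult (int k) a = 0"
      using finite_subgroup_torsion[OF S a] by blast
    then have "r a ^ k = 1"
      using character_on_zsmult[OF S ch a, of "int k"] character_on_zero[OF S ch] by simp
    with k show ?thesis unfolding R_def by auto
  qed
  let ?ext = "\<lambda>h b. if b \<in> S then h b else 1"
  have "characters S \<subseteq> ?ext ` PiE S (\<lambda>_. R)"
  proof
    fix r assume r: "r \<in> characters S"
    then have "r = ?ext (restrict r S)" by (auto simp: characters_iff restrict_def)
    moreover have "restrict r S \<in> PiE S (\<lambda>_. R)" using unit_values r by auto
    ultimately show "r \<in> ?ext ` PiE S (\<lambda>_. R)" by blast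
  qed
  moreover have "finite (PiE S (\<lambda>_. R))"
    using S \<open>finite R\<close> by (intro finite_PiE) (auto simp: finite_subgroup_def)
  ultimately show ?thesis by (rule finite_subset[OF _ finite_imageI])
qed

lemma unimodular_sum_eq_card:
  assumes "finite R" and "\<And>r. r \<in> R \<Longrightarrow> cmod (z r) = 1"
    and "(\<Sum>r\<in>R. z r) = of_nat (card R)" and "r \<in> R"
  shows "z r = 1"
proof -
  have "(\<Sum>r\<in>R. Re (z r)) = real (card R)"
    using arg_cong[OF assms(3), of Re] by simp
  then have "(\<Sum>r\<in>R. 1 - Re (z r)) = 0" by (simp only: sum_subtractf) simp
  moreover have "0 \<le> 1 - Re (z r)" if "r \<in> R" for r
    using complex_Re_le_cmod[of "z r"] assms(2)[OF that] by simp
  ultimately have "\<forall>r\<in>R. 1 - Re (z r) = 0" using sum_nonneg_eq_0_iff[OF assms(1), of "\<lambda>r. 1 - Re (z r)"] by blast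
  then have re: "Re (z r) = 1" using assms(4) by simp
  have "sqrt ((Re (z r))\<^sup>2 + (Im (z r))\<^sup>2) = 1"
    using assms(2)[OF assms(4)] by (simp only: cmod_def)
  then have "(Re (z r))\<^sup>2 + (Im (z r))\<^sup>2 = 1" by (metis real_sqrt_eq_1_iff)
  with re show ?thesis by (simp add: complex_eq_iff)
qed

lemma character_sum_eq_card_iff:
  assumes S: "finite_subgroup S" and a: "a \<in> S"
  shows "(\<Sum>r\<in>characters S. r a) = of_nat (card (characters S)) \<longleftrightarrow> a = 0"
proof
  assume sum: "(\<Sum>r\<in>characters S. r a) = of_nat (card (characters S))"
  have "r a = 1" if "r \<in> characters S" for r
    using unimodular_sum_eq_card[OF characters_finite[OF S] _ sum that] a
    by (auto simp: characters_iff character_on_def)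
  then show "a = 0" using characters_separate[OF S a] by metis
next
  assume "a = 0"
  then have "(\<Sum>r\<in>characters S. r a) = (\<Sum>r\<in>characters S. 1)"
    using character_on_zero[OF S] by (intro sum.cong) (auto simp: characters_iff)
  then show "(\<Sum>r\<in>characters S. r a) = of_nat (card (characters S))" by simp
qed

section \<open>Cochains and coboundaries\<close>

interpretation states: module cscale
  by unfold_locales (auto simp: cscale_def algebra_simps fun_eq_iff)

locale chain_complexes =
  fixes X :: "'x set" and deg :: "'x \<Rightarrow> int" and dC :: "'x \<Rightarrow> 'x \<Rightarrow> int"
    and Gc :: "int \<Rightarrow> 'g::ab_group_add set" and dG :: "int \<Rightarrow> 'g \<Rightarrow> 'g"
  assumes chain_complex_C: "chain_complex_C X deg dC"
    and chain_complex_G: "chain_complex_G Gc dG"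
begin

abbreviation "C p \<equiv> cochains X deg Gc p"
abbreviation "\<delta> p \<equiv> coboundary X deg dC dG p"

lemma finite_X: "finite X"
  using chain_complex_C by (simp add: chain_complex_C_def)

lemma dC_nonzero: "dC x y \<noteq> 0 \<Longrightarrow> x \<in> X \<and> y \<in> X \<and> deg y = deg x - 1"
  using chain_complex_C by (simp add: chain_complex_C_def)

lemma dC_dC: "(\<Sum>y\<in>X. dC x y * dC y z) = 0"
  using chain_complex_C by (simp add: chain_complex_C_def)

lemma Gc_subgroup: "finite_subgroup (Gc n)"
  using chain_complex_G by (simp add: chain_complex_G_def)

lemma dG_closed: "a \<in> Gc n \<Longrightarrow> dG n a \<in> Gc (n - 1)"
  using chain_complex_G by (simp add: chain_complex_G_def)

lemma dG_add: "a \<in> Gc n \<Longrightarrow> b \<in> Gc n \<Longrightarrow> dG n (a + b) = dG n a + dG n b"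
  using chain_complex_G by (simp add: chain_complex_G_def)

lemma dG_dG: "a \<in> Gc n \<Longrightarrow> dG (n - 1) (dG n a) = 0"
  using chain_complex_G by (simp add: chain_complex_G_def)

lemma Gc_zero: "0 \<in> Gc n"
  using Gc_subgroup[of n] by (simp add: finite_subgroup_def)

lemma card_Gc_nonzero: "card (Gc n) \<noteq> 0"
  using Gc_subgroup[of n] Gc_zero[of n] by (auto simp: finite_subgroup_def)

lemma Gc_add: "a \<in> Gc n \<Longrightarrow> b \<in> Gc n \<Longrightarrow> a + b \<in> Gc n"
  using Gc_subgroup[of n] by (simp add: finite_subgroup_def)

lemma Gc_diff: "a \<in> Gc n \<Longrightarrow> b \<in> Gc n \<Longrightarrow> a - b \<in> Gc n"
  by (rule finite_subgroup_diff[OF Gc_subgroup])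

lemma dG_zero: "dG n 0 = 0"
  by (rule additive_on_zero[OF Gc_subgroup dG_add])

lemma dG_zsmult: "a \<in> Gc n \<Longrightarrow> dG n (zsmult k a) = zsmult k (dG n a)"
  by (rule additive_on_zsmult[OF Gc_subgroup _ dG_add])

lemma dG_sum: "(\<And>i. i \<in> A \<Longrightarrow> f i \<in> Gc n) \<Longrightarrow> dG n (\<Sum>i\<in>A. f i) = (\<Sum>i\<in>A. dG n (f i))"
  by (rule additive_on_sum[OF Gc_subgroup _ dG_add])

lemma finite_cochains: "finite (C p)"
proof -
  let ?ext = "\<lambda>h x. if x \<in> X then h x else 0"
  have "C p \<subseteq> ?ext ` PiE X (\<lambda>x. Gc (deg x - p))"
  proof
    fix f assume f: "f \<in> C p"
    then have "f = ?ext (restrict f X)" by (auto simp: cochains_def restrict_def)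
    moreover have "restrict f X \<in> PiE X (\<lambda>x. Gc (deg x - p))" using f by (auto simp: cochains_def)
    ultimately show "f \<in> ?ext ` PiE X (\<lambda>x. Gc (deg x - p))" by blast
  qed
  moreover have "finite (PiE X (\<lambda>x. Gc (deg x - p)))"
    using finite_X Gc_subgroup by (intro finite_PiE) (auto simp: finite_subgroup_def)
  ultimately show ?thesis by (rule finite_subset[OF _ finite_imageI])
qed

lemma cochains_zero: "(\<lambda>x. 0) \<in> C p"
  by (simp add: cochains_def Gc_zero)

lemma cochains_add: "f \<in> C p \<Longrightarrow> g \<in> C p \<Longrightarrow> (\<lambda>x. f x + g x) \<in> C p"
  by (simp add: cochains_def Gc_add)

lemma cochains_diff: "f \<in> C p \<Longrightarrow> g \<in> C p \<Longrightarrow> (\<lambda>x. f x - g x) \<in> C p"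
  by (simp add: cochains_def Gc_diff)

lemma zsmult_dC_cochain:
  assumes f: "f \<in> C p"
  shows "zsmult (dC x y) (f y) \<in> Gc (deg x - (p + 1))"
proof (cases "dC x y = 0")
  case False
  then have y: "y \<in> X" and deg_y: "deg y - p = deg x - (p + 1)" using dC_nonzero by auto
  have "f y \<in> Gc (deg y - p)" using f y by (simp add: cochains_def)
  then have "f y \<in> Gc (deg x - (p + 1))" by (simp only: deg_y)
  then show ?thesis by (rule finite_subgroup_zsmult[OF Gc_subgroup])
qed (simp add: Gc_zero)

lemma coboundary_cochains:
  assumes f: "f \<in> C p"
  shows "\<delta> p f \<in> C (p + 1)"
proof -
  have "\<delta> p f x \<in> Gc (deg x - (p + 1))" if x: "x \<in> X" for x
  proof -
    have "(\<Sum>y\<in>X. zsmult (dC x y) (f y)) \<in> Gc (deg x - (p + 1))"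
      using zsmult_dC_cochain[OF f] by (intro finite_subgroup_sum[OF Gc_subgroup])
    moreover have "dG (deg x - p) (f x) \<in> Gc (deg x - (p + 1))"
      using dG_closed[of "f x" "deg x - p"] f x by (simp add: cochains_def diff_diff_add)
    ultimately show ?thesis using x by (simp add: coboundary_def Gc_add Gc_diff)
  qed
  then show ?thesis by (auto simp: cochains_def coboundary_def)
qed

lemma coboundary_add:
  assumes "f \<in> C p" and "g \<in> C p"
  shows "\<delta> p (\<lambda>x. f x + g x) = (\<lambda>x. \<delta> p f x + \<delta> p g x)"
proof
  fix x
  show "\<delta> p (\<lambda>x. f x + g x) x = \<delta> p f x + \<delta> p g x"
  proof (cases "x \<in> X")
    case True
    then have "dG (deg x - p) (f x + g x) = dG (deg x - p) (f x) + dG (deg x - p) (g x)"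
      using assms by (intro dG_add) (auto simp: cochains_def)
    with True show ?thesis by (simp add: coboundary_def zsmult_add_right sum.distrib algebra_simps)
  qed (simp add: coboundary_def)
qed

lemma coboundary_zero: "\<delta> p (\<lambda>x. 0) = (\<lambda>x. 0)"
  by (simp add: coboundary_def dG_zero fun_eq_iff)

lemma coboundary_diff:
  assumes "f \<in> C p" and "g \<in> C p"
  shows "\<delta> p (\<lambda>x. f x - g x) = (\<lambda>x. \<delta> p f x - \<delta> p g x)"
  using coboundary_add[OF cochains_diff[OF assms] assms(2)] by (simp add: fun_eq_iff eq_diff_eq)

lemma boundary_boundary_sum: "(\<Sum>y\<in>X. zsmult (dC x y) (\<Sum>z\<in>X. zsmult (dC y z) (t z))) = 0"
proof -
  have "(\<Sum>y\<in>X. zsmult (dC x y) (\<Sum>z\<in>X. zsmult (dC y z) (t z)))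
      = (\<Sum>z\<in>X. \<Sum>y\<in>X. zsmult (dC x y * dC y z) (t z))"
    by (simp add: zsmult_sum_right zsmult_mult) (rule sum.swap)
  also have "\<dots> = (\<Sum>z\<in>X. zsmult (\<Sum>y\<in>X. dC x y * dC y z) (t z))"
    by (simp add: zsmult_sum_left)
  finally show ?thesis by (simp add: dC_dC)
qed

lemma dG_boundary_sum:
  assumes t: "t \<in> C (-1)"
  shows "dG (deg x) (\<Sum>z\<in>X. zsmult (dC x z) (t z)) = (\<Sum>z\<in>X. zsmult (dC x z) (dG (deg z + 1) (t z)))"
proof -
  have "dG (deg x) (\<Sum>z\<in>X. zsmult (dC x z) (t z)) = (\<Sum>z\<in>X. dG (deg x) (zsmult (dC x z) (t z)))"
    using zsmult_dC_cochain[OF t] by (intro dG_sum) simp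
  also have "\<dots> = (\<Sum>z\<in>X. zsmult (dC x z) (dG (deg z + 1) (t z)))"
  proof (rule sum.cong)
    fix z assume z: "z \<in> X"
    show "dG (deg x) (zsmult (dC x z) (t z)) = zsmult (dC x z) (dG (deg z + 1) (t z))"
    proof (cases "dC x z = 0")
      case False
      then have "deg x = deg z + 1" using dC_nonzero by force
      with t z show ?thesis by (simp add: dG_zsmult cochains_def)
    qed (simp add: dG_zero)
  qed simp
  finally show ?thesis .
qed

lemma coboundary_coboundary:
  assumes t: "t \<in> C (-1)"
  shows "\<delta> 0 (\<delta> (-1) t) = (\<lambda>x. 0)"
proof
  fix x
  show "\<delta> 0 (\<delta> (-1) t) x = 0"
  proof (cases "x \<in> X")
    case True
    let ?b = "\<lambda>y. \<Sum>z\<in>X. zsmult (dC y z) (t z)"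
    let ?d = "\<lambda>y. dG (deg y + 1) (t y)"
    have \<delta>t: "\<delta> (-1) t y = ?b y + ?d y" if "y \<in> X" for y
      using that by (simp add: coboundary_def)
    have tx: "t x \<in> Gc (deg x + 1)" using t True by (simp add: cochains_def)
    have "(\<Sum>y\<in>X. zsmult (dC x y) (\<delta> (-1) t y))
        = (\<Sum>y\<in>X. zsmult (dC x y) (?b y)) + (\<Sum>y\<in>X. zsmult (dC x y) (?d y))"
      by (simp only: \<delta>t zsmult_add_right sum.distrib cong: sum.cong)
    also have "\<dots> = dG (deg x) (?b x)"
      by (simp only: boundary_boundary_sum dG_boundary_sum[OF t] add_0)
    also have "\<dots> = dG (deg x) (\<delta> (-1) t x)"
    proof -
      have "?b x \<in> Gc (deg x)"
        using zsmult_dC_cochain[OF t] by (intro finite_subgroup_sum[OF Gc_subgroup]) simp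
      then have "dG (deg x) (?b x + ?d x) = dG (deg x) (?b x) + dG (deg x) (?d x)"
        using dG_closed[OF tx] by (intro dG_add) simp_all
      with dG_dG[OF tx] True show ?thesis by (simp add: \<delta>t)
    qed
    finally show ?thesis using True by (simp add: coboundary_def[of X deg dC dG 0])
  qed (simp add: coboundary_def)
qed

end

section \<open>Coset states\<close>

context chain_complexes
begin

abbreviation "Z \<equiv> cocycles0 X deg dC Gc dG"
abbreviation "B \<equiv> coboundaries0 X deg dC Gc dG"
abbreviation "A_ket f \<equiv> A_total X deg dC Gc dG (ket f)"

lemma coboundaries0_zero: "(\<lambda>x. 0) \<in> B"
  unfolding coboundaries0_def using cochains_zero coboundary_zero[symmetric] by blast

lemma coboundaries0_add:
  assumes "a \<in> B" and "b \<in> B"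
  shows "(\<lambda>x. a x + b x) \<in> B"
proof -
  obtain s t where st: "s \<in> C (-1)" "t \<in> C (-1)" and "a = \<delta> (-1) s" "b = \<delta> (-1) t"
    using assms by (auto simp: coboundaries0_def)
  then have "(\<lambda>x. a x + b x) = \<delta> (-1) (\<lambda>x. s x + t x)" by (simp add: coboundary_add)
  with cochains_add[OF st] show ?thesis unfolding coboundaries0_def by blast
qed

lemma coboundaries0_diff:
  assumes "a \<in> B" and "b \<in> B"
  shows "(\<lambda>x. a x - b x) \<in> B"
proof -
  obtain s t where st: "s \<in> C (-1)" "t \<in> C (-1)" and "a = \<delta> (-1) s" "b = \<delta> (-1) t"
    using assms by (auto simp: coboundaries0_def)
  then have "(\<lambda>x. a x - b x) = \<delta> (-1) (\<lambda>x. s x - t x)" by (simp add: coboundary_diff)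
  with cochains_diff[OF st] show ?thesis unfolding coboundaries0_def by blast
qed

lemma coboundaries0_cocycles0: "b \<in> B \<Longrightarrow> b \<in> Z"
  using coboundary_cochains[of _ "-1"] coboundary_coboundary
  by (auto simp: coboundaries0_def cocycles0_def)

lemma cocycles0_diff: "f \<in> Z \<Longrightarrow> g \<in> Z \<Longrightarrow> (\<lambda>x. f x - g x) \<in> Z"
  by (simp add: cocycles0_def cochains_diff coboundary_diff)

lemma cocycles0_add: "f \<in> Z \<Longrightarrow> g \<in> Z \<Longrightarrow> (\<lambda>x. f x + g x) \<in> Z"
  by (simp add: cocycles0_def cochains_add coboundary_add)

lemma finite_cocycles0: "finite Z"
  using finite_cochains[of 0] by (rule rev_finite_subset) (auto simp: cocycles0_def)

lemma finite_coboundaries0: "finite B"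
  by (simp add: coboundaries0_def finite_cochains)

definition ket_weight :: complex where
  "ket_weight = of_nat (card {t \<in> C (-1). \<delta> (-1) t = (\<lambda>x. 0)}) / of_nat (card (C (-1)))"

lemma ket_weight_nonzero: "ket_weight \<noteq> 0"
proof -
  have "(\<lambda>x. 0) \<in> {t \<in> C (-1). \<delta> (-1) t = (\<lambda>x. 0)}"
    using cochains_zero coboundary_zero by simp
  moreover have "finite {t \<in> C (-1). \<delta> (-1) t = (\<lambda>x. 0)}"
    using finite_cochains by simp
  ultimately have "card {t \<in> C (-1). \<delta> (-1) t = (\<lambda>x. 0)} \<noteq> 0" by auto
  moreover have "card (C (-1)) \<noteq> 0" using finite_cochains cochains_zero by auto
  ultimately show ?thesis by (simp add: ket_weight_def)
qed

lemma card_coboundary_fibre: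
  "card {t \<in> C (-1). \<delta> (-1) t = d}
     = (if d \<in> B then card {t \<in> C (-1). \<delta> (-1) t = (\<lambda>x. 0)} else 0)"
proof (cases "d \<in> B")
  case True
  then obtain t0 where t0: "t0 \<in> C (-1)" "d = \<delta> (-1) t0" by (auto simp: coboundaries0_def)
  let ?K = "{t \<in> C (-1). \<delta> (-1) t = (\<lambda>x. 0)}"
  let ?shift = "\<lambda>u x. u x + t0 x"
  have "{t \<in> C (-1). \<delta> (-1) t = d} = ?shift ` ?K"
  proof
    show "?shift ` ?K \<subseteq> {t \<in> C (-1). \<delta> (-1) t = d}"
      using t0 cochains_add coboundary_add by auto
    show "{t \<in> C (-1). \<delta> (-1) t = d} \<subseteq> ?shift ` ?K"
    proof
      fix t assume "t \<in> {t \<in> C (-1). \<delta> (-1) t = d}"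
      then have "(\<lambda>x. t x - t0 x) \<in> ?K" using t0 cochains_diff coboundary_diff by auto
      then show "t \<in> ?shift ` ?K" by (rule rev_image_eqI) simp
    qed
  qed
  moreover have "inj_on ?shift ?K" by (auto simp: inj_on_def fun_eq_iff)
  ultimately show ?thesis using True by (simp add: card_image)
next
  case False
  then have "{t \<in> C (-1). \<delta> (-1) t = d} = {}" by (auto simp: coboundaries0_def)
  then show ?thesis using False by (simp only: card.empty if_False)
qed

lemma A_ket_apply: "A_ket f g = (if (\<lambda>x. g x - f x) \<in> B then ket_weight else 0)"
proof -
  have "A_ket f g = (\<Sum>t\<in>C (-1). if (\<lambda>x. g x - \<delta> (-1) t x) = f then 1 else 0) / of_nat (card (C (-1)))"
    by (simp add: A_total_def cscale_def sum_fun_apply Aop_def Pop_def ket_def)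
  also have "\<dots> = (\<Sum>t\<in>C (-1). if \<delta> (-1) t = (\<lambda>x. g x - f x) then 1 else 0) / of_nat (card (C (-1)))"
    by (intro arg_cong2[where f = "(/)"] sum.cong) (auto simp: fun_eq_iff algebra_simps)
  also have "\<dots> = of_nat (card {t \<in> C (-1). \<delta> (-1) t = (\<lambda>x. g x - f x)}) / of_nat (card (C (-1)))"
    using finite_cochains[of "-1"] by (simp add: sum.inter_filter[symmetric])
  finally show ?thesis by (simp add: card_coboundary_fibre ket_weight_def)
qed

lemma A_ket_eq_iff: "A_ket f = A_ket g \<longleftrightarrow> (\<lambda>x. f x - g x) \<in> B"
proof
  assume "A_ket f = A_ket g"
  moreover have "A_ket f f = ket_weight" using coboundaries0_zero by (simp add: A_ket_apply)
  ultimately have "A_ket g f \<noteq> 0" using ket_weight_nonzero by simp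
  then show "(\<lambda>x. f x - g x) \<in> B" by (metis A_ket_apply)
next
  assume fg: "(\<lambda>x. f x - g x) \<in> B"
  have "(\<lambda>x. h x - f x) \<in> B \<longleftrightarrow> (\<lambda>x. h x - g x) \<in> B" for h
  proof
    assume "(\<lambda>x. h x - f x) \<in> B"
    from coboundaries0_add[OF this fg] show "(\<lambda>x. h x - g x) \<in> B" by simp
  next
    assume "(\<lambda>x. h x - g x) \<in> B"
    from coboundaries0_diff[OF this fg] show "(\<lambda>x. h x - f x) \<in> B" by simp
  qed
  then show "A_ket f = A_ket g" unfolding A_ket_apply by (intro ext) presburger
qed

end

section \<open>The ground space\<close>

context chain_complexes
begin

definition invariant_states :: "('x, 'g) state set" where
  "invariant_states = {\<Psi> \<in> Hspace Z. \<forall>f t. t \<in> C (-1) \<longrightarrow> \<Psi> (\<lambda>x. f x - \<delta> (-1) t x) = \<Psi> f}"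

lemma B_vertex_apply:
  "B_vertex X deg dC Gc dG x \<Psi> f
     = (\<Sum>r\<in>characters (Gc (deg x - 1)). r (\<delta> 0 f x)) / of_nat (card (characters (Gc (deg x - 1)))) * \<Psi> f"
  by (simp add: B_vertex_def cscale_def sum_fun_apply Bop_def Qop_def sum_distrib_right)

lemma B_vertex_fixed_iff:
  assumes x: "x \<in> X" and \<Psi>: "\<Psi> \<in> Hspace (C 0)"
  shows "B_vertex X deg dC Gc dG x \<Psi> f = \<Psi> f \<longleftrightarrow> \<Psi> f = 0 \<or> \<delta> 0 f x = 0"
proof (cases "f \<in> C 0")
  case True
  let ?R = "characters (Gc (deg x - 1))"
  have "card ?R \<noteq> 0" using characters_finite[OF Gc_subgroup] one_in_characters by auto
  moreover have "\<delta> 0 f x \<in> Gc (deg x - 1)"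
    using coboundary_cochains[OF True] x by (simp add: cochains_def)
  ultimately have avg: "(\<Sum>r\<in>?R. r (\<delta> 0 f x)) / of_nat (card ?R) = 1 \<longleftrightarrow> \<delta> 0 f x = 0"
    using character_sum_eq_card_iff[OF Gc_subgroup] by simp
  show ?thesis by (simp only: B_vertex_apply mult_cancel_right2 avg)
next
  case False
  then show ?thesis using \<Psi> by (simp add: Hspace_def B_vertex_apply)
qed

lemma B_vertices_fixed_iff:
  assumes \<Psi>: "\<Psi> \<in> Hspace (C 0)"
  shows "(\<forall>x\<in>X. B_vertex X deg dC Gc dG x \<Psi> = \<Psi>) \<longleftrightarrow> \<Psi> \<in> Hspace Z"
proof -
  have "(\<forall>x\<in>X. B_vertex X deg dC Gc dG x \<Psi> = \<Psi>)
      \<longleftrightarrow> (\<forall>f. \<Psi> f \<noteq> 0 \<longrightarrow> (\<forall>x\<in>X. \<delta> 0 f x = 0))"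
    unfolding fun_eq_iff using B_vertex_fixed_iff[OF _ \<Psi>] by blast
  also have "\<dots> \<longleftrightarrow> \<Psi> \<in> Hspace Z"
    using \<Psi> by (auto simp: Hspace_def cocycles0_def coboundary_def fun_eq_iff)
  finally show ?thesis .
qed

lemma A_vertex_apply:
  "A_vertex X deg dC Gc dG x \<Psi> f
     = (\<Sum>h\<in>Gc (deg x + 1). \<Psi> (\<lambda>y. f y - \<delta> (-1) (loc_cochain x h) y)) / of_nat (card (Gc (deg x + 1)))"
  by (simp add: A_vertex_def cscale_def sum_fun_apply Aop_def Pop_def)

lemma loc_cochain_cochains: "x \<in> X \<Longrightarrow> h \<in> Gc (deg x + 1) \<Longrightarrow> loc_cochain x h \<in> C (-1)"
  by (auto simp: cochains_def loc_cochain_def Gc_zero)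

text \<open>The translations by \<open>\<delta>(h x\<^sup>*)\<close>, \<open>h \<in> G\<^sub>n\<^sub>+\<^sub>1\<close>, form a group because
  \<open>h \<mapsto> \<delta>(h x\<^sup>*)\<close> is additive, so their average is invariant under each of them.\<close>

lemma A_vertex_fixed_iff:
  assumes x: "x \<in> X"
  shows "A_vertex X deg dC Gc dG x \<Psi> = \<Psi>
    \<longleftrightarrow> (\<forall>h\<in>Gc (deg x + 1). \<forall>f. \<Psi> (\<lambda>y. f y - \<delta> (-1) (loc_cochain x h) y) = \<Psi> f)"
proof
  let ?G = "Gc (deg x + 1)"
  let ?T = "\<lambda>h f y. f y - \<delta> (-1) (loc_cochain x h) y"
  assume fixed: "A_vertex X deg dC Gc dG x \<Psi> = \<Psi>"
  show "\<forall>h\<in>?G. \<forall>f. \<Psi> (?T h f) = \<Psi> f"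
  proof (intro ballI allI)
    fix h0 f assume h0: "h0 \<in> ?G"
    have shift: "?T h (?T h0 f) = ?T (h0 + h) f" if "h \<in> ?G" for h
    proof -
      have "loc_cochain x (h0 + h) = (\<lambda>y. loc_cochain x h0 y + loc_cochain x h y)"
        by (simp add: loc_cochain_def fun_eq_iff)
      then have "\<delta> (-1) (loc_cochain x (h0 + h))
          = (\<lambda>y. \<delta> (-1) (loc_cochain x h0) y + \<delta> (-1) (loc_cochain x h) y)"
        using coboundary_add[OF loc_cochain_cochains[OF x h0] loc_cochain_cochains[OF x that]]
        by (simp only:)
      then show ?thesis by (simp add: fun_eq_iff algebra_simps)
    qed
    have "bij_betw (\<lambda>h. h0 + h) ?G ?G"
      by (rule bij_betw_byWitness[where f' = "\<lambda>h. h - h0"]) (auto simp: Gc_add Gc_diff h0)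
    then have "(\<Sum>h\<in>?G. \<Psi> (?T (h0 + h) f)) = (\<Sum>h\<in>?G. \<Psi> (?T h f))"
      by (rule sum.reindex_bij_betw)
    then have "A_vertex X deg dC Gc dG x \<Psi> (?T h0 f) = A_vertex X deg dC Gc dG x \<Psi> f"
      by (simp add: A_vertex_apply shift)
    then show "\<Psi> (?T h0 f) = \<Psi> f" by (simp add: fixed)
  qed
next
  assume "\<forall>h\<in>Gc (deg x + 1). \<forall>f. \<Psi> (\<lambda>y. f y - \<delta> (-1) (loc_cochain x h) y) = \<Psi> f"
  then show "A_vertex X deg dC Gc dG x \<Psi> = \<Psi>"
    using card_Gc_nonzero by (simp add: A_vertex_apply fun_eq_iff)
qed

lemma cochains_sum: "(\<And>i. i \<in> I \<Longrightarrow> s i \<in> C p) \<Longrightarrow> (\<Sum>i\<in>I. s i) \<in> C p"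
  by (induct I rule: infinite_finite_induct) (auto simp: zero_fun_def plus_fun_def cochains_zero cochains_add)

lemma sum_loc_cochain: "t \<in> C p \<Longrightarrow> (\<Sum>x\<in>X. loc_cochain x (t x)) = t"
  using finite_X by (auto simp: sum_fun_apply loc_cochain_def cochains_def fun_eq_iff)

lemma translation_invariant_sum:
  assumes "\<And>i. i \<in> I \<Longrightarrow> s i \<in> C (-1)"
    and "\<And>i f. i \<in> I \<Longrightarrow> \<Psi> (\<lambda>y. f y - \<delta> (-1) (s i) y) = \<Psi> f"
  shows "\<Psi> (\<lambda>y. f y - \<delta> (-1) (\<Sum>i\<in>I. s i) y) = \<Psi> f"
  using assms
proof (induct I arbitrary: f rule: infinite_finite_induct)
  case (insert i I)
  let ?g = "\<lambda>y. f y - \<delta> (-1) (\<Sum>i\<in>I. s i) y"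
  have "\<delta> (-1) (\<Sum>i\<in>insert i I. s i) = (\<lambda>y. \<delta> (-1) (s i) y + \<delta> (-1) (\<Sum>i\<in>I. s i) y)"
    using insert coboundary_add[OF _ cochains_sum, of "s i" "-1" I s] by (simp add: plus_fun_def)
  then have "(\<lambda>y. f y - \<delta> (-1) (\<Sum>i\<in>insert i I. s i) y) = (\<lambda>y. ?g y - \<delta> (-1) (s i) y)"
    by (simp add: fun_eq_iff algebra_simps)
  then have "\<Psi> (\<lambda>y. f y - \<delta> (-1) (\<Sum>i\<in>insert i I. s i) y) = \<Psi> (\<lambda>y. ?g y - \<delta> (-1) (s i) y)"
    by (rule arg_cong)
  also have "\<dots> = \<Psi> ?g" using insert.prems(2) by simp
  also have "\<dots> = \<Psi> f" using insert by simp
  finally show ?case .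
qed (simp_all add: zero_fun_def coboundary_zero)

lemma A_vertices_fixed_iff:
  "(\<forall>x\<in>X. A_vertex X deg dC Gc dG x \<Psi> = \<Psi>)
     \<longleftrightarrow> (\<forall>f t. t \<in> C (-1) \<longrightarrow> \<Psi> (\<lambda>y. f y - \<delta> (-1) t y) = \<Psi> f)"
proof
  assume "\<forall>x\<in>X. A_vertex X deg dC Gc dG x \<Psi> = \<Psi>"
  then have local: "\<Psi> (\<lambda>y. f y - \<delta> (-1) (loc_cochain x h) y) = \<Psi> f"
    if "x \<in> X" "h \<in> Gc (deg x + 1)" for x h f
    using that A_vertex_fixed_iff by blast
  show "\<forall>f t. t \<in> C (-1) \<longrightarrow> \<Psi> (\<lambda>y. f y - \<delta> (-1) t y) = \<Psi> f"
  proof (intro allI impI)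
    fix f t assume t: "t \<in> C (-1)"
    then have "t x \<in> Gc (deg x + 1)" if "x \<in> X" for x using that by (simp add: cochains_def)
    then have "\<Psi> (\<lambda>y. f y - \<delta> (-1) (\<Sum>x\<in>X. loc_cochain x (t x)) y) = \<Psi> f"
      by (intro translation_invariant_sum loc_cochain_cochains local)
    then show "\<Psi> (\<lambda>y. f y - \<delta> (-1) t y) = \<Psi> f" by (simp add: sum_loc_cochain[OF t])
  qed
next
  assume "\<forall>f t. t \<in> C (-1) \<longrightarrow> \<Psi> (\<lambda>y. f y - \<delta> (-1) t y) = \<Psi> f"
  then show "\<forall>x\<in>X. A_vertex X deg dC Gc dG x \<Psi> = \<Psi>"
    using A_vertex_fixed_iff loc_cochain_cochains by blast
qed

lemma ground_space_eq: "ground_space X deg dC Gc dG = invariant_states"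
proof (intro set_eqI)
  fix \<Psi>
  have "\<Psi> \<in> ground_space X deg dC Gc dG \<longleftrightarrow> \<Psi> \<in> Hspace (C 0)
      \<and> (\<forall>x\<in>X. B_vertex X deg dC Gc dG x \<Psi> = \<Psi>) \<and> (\<forall>x\<in>X. A_vertex X deg dC Gc dG x \<Psi> = \<Psi>)"
    by (auto simp: ground_space_def)
  also have "\<dots> \<longleftrightarrow> \<Psi> \<in> invariant_states"
  proof -
    have "Hspace Z \<subseteq> Hspace (C 0)" by (auto simp: Hspace_def cocycles0_def)
    then show ?thesis
      using B_vertices_fixed_iff A_vertices_fixed_iff unfolding invariant_states_def by blast
  qed
  finally show "\<Psi> \<in> ground_space X deg dC Gc dG \<longleftrightarrow> \<Psi> \<in> invariant_states" .
qed

end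

context chain_complexes
begin

lemma invariant_states_subspace: "states.subspace invariant_states"
  by (rule states.subspaceI)
    (auto simp: invariant_states_def Hspace_def zero_fun_def plus_fun_def cscale_def)

lemma coboundaries0_shift_iff:
  "t \<in> C (-1) \<Longrightarrow> (\<lambda>x. (g x - \<delta> (-1) t x) - f x) \<in> B \<longleftrightarrow> (\<lambda>x. g x - f x) \<in> B"
proof -
  assume "t \<in> C (-1)"
  then have t: "\<delta> (-1) t \<in> B" by (simp add: coboundaries0_def)
  show ?thesis
  proof
    assume "(\<lambda>x. (g x - \<delta> (-1) t x) - f x) \<in> B"
    from coboundaries0_add[OF this t] show "(\<lambda>x. g x - f x) \<in> B" by simp
  next
    assume "(\<lambda>x. g x - f x) \<in> B"
    from coboundaries0_diff[OF this t] show "(\<lambda>x. (g x - \<delta> (-1) t x) - f x) \<in> B"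
      by (simp add: algebra_simps)
  qed
qed

lemma A_ket_invariant:
  assumes f: "f \<in> Z"
  shows "A_ket f \<in> invariant_states"
proof -
  have "A_ket f g = 0" if "g \<notin> Z" for g
  proof (rule ccontr)
    assume "A_ket f g \<noteq> 0"
    then have "(\<lambda>x. g x - f x) \<in> B" by (simp add: A_ket_apply split: if_splits)
    from cocycles0_add[OF f coboundaries0_cocycles0[OF this]] that show False by simp
  qed
  moreover have "A_ket f (\<lambda>x. g x - \<delta> (-1) t x) = A_ket f g" if "t \<in> C (-1)" for g t
    by (simp only: A_ket_apply coboundaries0_shift_iff[OF that])
  ultimately show ?thesis by (simp add: invariant_states_def Hspace_def)
qed

lemma card_coset_cocycles0:
  assumes g: "g \<in> Z"
  shows "card {f \<in> Z. (\<lambda>x. g x - f x) \<in> B} = card B"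
proof -
  let ?m = "\<lambda>b x. g x - b x"
  have "{f \<in> Z. (\<lambda>x. g x - f x) \<in> B} = ?m ` B"
  proof
    show "{f \<in> Z. (\<lambda>x. g x - f x) \<in> B} \<subseteq> ?m ` B"
      by (auto intro: rev_image_eqI[where x = "\<lambda>x. g x - _ x"])
    show "?m ` B \<subseteq> {f \<in> Z. (\<lambda>x. g x - f x) \<in> B}"
      using cocycles0_diff[OF g coboundaries0_cocycles0] by auto
  qed
  moreover have "inj_on ?m B" by (auto simp: inj_on_def fun_eq_iff)
  ultimately show ?thesis by (simp add: card_image)
qed

lemma invariant_state_expansion:
  assumes \<Psi>: "\<Psi> \<in> invariant_states"
  shows "(\<Sum>f\<in>Z. cscale (\<Psi> f) (A_ket f)) = cscale (ket_weight * of_nat (card B)) \<Psi>"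
proof
  fix g
  let ?T = "{f \<in> Z. (\<lambda>x. g x - f x) \<in> B}"
  have summand: "\<Psi> f * A_ket f g = (if f \<in> ?T then \<Psi> g * ket_weight else 0)" if "f \<in> Z" for f
  proof (cases "(\<lambda>x. g x - f x) \<in> B")
    case True
    then obtain t where t: "t \<in> C (-1)" "(\<lambda>x. g x - f x) = \<delta> (-1) t"
      by (auto simp: coboundaries0_def)
    then have "f = (\<lambda>x. g x - \<delta> (-1) t x)" by (simp add: fun_eq_iff algebra_simps)
    then have "\<Psi> f = \<Psi> g" using \<Psi> t(1) by (simp add: invariant_states_def)
    with True that show ?thesis by (simp add: A_ket_apply)
  qed (simp add: A_ket_apply)
  have "(\<Sum>f\<in>Z. cscale (\<Psi> f) (A_ket f)) g = (\<Sum>f\<in>Z. if f \<in> ?T then \<Psi> g * ket_weight else 0)"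
    using summand by (simp add: sum_fun_apply cscale_def)
  also have "\<dots> = \<Psi> g * ket_weight * of_nat (card ?T)"
    using finite_cocycles0 by (simp add: sum.inter_filter[symmetric])
  also have "\<dots> = \<Psi> g * ket_weight * of_nat (card B)"
  proof (cases "\<Psi> g = 0")
    case False
    then have "g \<in> Z" using \<Psi> by (auto simp: invariant_states_def Hspace_def)
    then show ?thesis by (simp add: card_coset_cocycles0)
  qed simp
  finally show "(\<Sum>f\<in>Z. cscale (\<Psi> f) (A_ket f)) g = cscale (ket_weight * of_nat (card B)) \<Psi> g"
    by (simp add: cscale_def)
qed

lemma span_A_ket: "states.span (A_ket ` Z) = invariant_states"
proof
  show "states.span (A_ket ` Z) \<subseteq> invariant_states"
    using A_ket_invariant by (intro states.span_minimal[OF _ invariant_states_subspace]) auto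
  show "invariant_states \<subseteq> states.span (A_ket ` Z)"
  proof
    fix \<Psi> assume \<Psi>: "\<Psi> \<in> invariant_states"
    let ?k = "ket_weight * of_nat (card B)"
    have "?k \<noteq> 0"
      using ket_weight_nonzero finite_coboundaries0 coboundaries0_zero by auto
    have "(\<Sum>f\<in>Z. cscale (\<Psi> f) (A_ket f)) \<in> states.span (A_ket ` Z)"
      by (intro states.span_sum states.span_scale states.span_base) auto
    then have "cscale (1 / ?k) (cscale ?k \<Psi>) \<in> states.span (A_ket ` Z)"
      unfolding invariant_state_expansion[OF \<Psi>] by (rule states.span_scale)
    with \<open>?k \<noteq> 0\<close> show "\<Psi> \<in> states.span (A_ket ` Z)" by simp
  qed
qed

lemma A_ket_independent: "\<not> states.dependent (A_ket ` Z)"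
proof
  assume "states.dependent (A_ket ` Z)"
  then obtain T u v0 where T: "finite T" "T \<subseteq> A_ket ` Z" "(\<Sum>v\<in>T. cscale (u v) v) = 0"
    and v0: "v0 \<in> T" "u v0 \<noteq> 0"
    unfolding states.dependent_explicit by blast
  obtain f0 where f0: "v0 = A_ket f0" using v0 T by blast
  have val: "v f0 = (if v = v0 then ket_weight else 0)" if v: "v \<in> T" for v
  proof -
    obtain f where "v = A_ket f" using v T by blast
    then show ?thesis using f0 by (auto simp: A_ket_apply simp flip: A_ket_eq_iff)
  qed
  have "(\<Sum>v\<in>T. cscale (u v) v) f0 = (\<Sum>v\<in>T. if v = v0 then u v0 * ket_weight else 0)"
    unfolding sum_fun_apply cscale_def by (rule sum.cong) (simp_all add: val)
  also have "\<dots> = u v0 * ket_weight" using T(1) v0(1) by simp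
  finally have "(\<Sum>v\<in>T. cscale (u v) v) f0 = u v0 * ket_weight" .
  with T(3) v0(2) ket_weight_nonzero show False by simp
qed

lemma A_ket_coset: "A_ket ` ((\<lambda>t x. f x + t x) ` B) = {A_ket f}"
proof -
  have "A_ket (\<lambda>x. f x + t x) = A_ket f" if "t \<in> B" for t
    using that by (simp add: A_ket_eq_iff)
  moreover have "f \<in> (\<lambda>t x. f x + t x) ` B"
    by (rule image_eqI[of _ _ "\<lambda>x. 0"]) (simp_all add: coboundaries0_zero)
  ultimately show ?thesis by force
qed

lemma cosets_eq:
  assumes "(\<lambda>x. f x - g x) \<in> B"
  shows "(\<lambda>t x. f x + t x) ` B = (\<lambda>t x. g x + t x) ` B"
proof -
  have sub: "(\<lambda>t x. f x + t x) ` B \<subseteq> (\<lambda>t x. g x + t x) ` B" if "(\<lambda>x. f x - g x) \<in> B" for f g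
  proof
    fix y assume "y \<in> (\<lambda>t x. f x + t x) ` B"
    then obtain t where t: "t \<in> B" "y = (\<lambda>x. f x + t x)" by auto
    then have "y = (\<lambda>x. g x + ((f x - g x) + t x))" by (simp add: algebra_simps)
    from this coboundaries0_add[OF that t(1)] show "y \<in> (\<lambda>t x. g x + t x) ` B" by (rule image_eqI)
  qed
  have "(\<lambda>x. g x - f x) \<in> B"
    using coboundaries0_diff[OF coboundaries0_zero assms] by simp
  with sub assms show ?thesis by blast
qed

lemma bij_cohomology0_A_ket:
  "bij_betw (\<lambda>c. the_elem (A_ket ` c)) (cohomology0 X deg dC Gc dG) (A_ket ` Z)"
proof -
  let ?coset = "\<lambda>f. (\<lambda>t x. f x + t x) ` B"
  have the: "the_elem (A_ket ` ?coset f) = A_ket f" for f by (simp add: A_ket_coset)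
  have inj: "inj_on (\<lambda>c. the_elem (A_ket ` c)) (?coset ` Z)"
  proof (rule inj_onI)
    fix c1 c2 assume "c1 \<in> ?coset ` Z" "c2 \<in> ?coset ` Z" "the_elem (A_ket ` c1) = the_elem (A_ket ` c2)"
    then obtain f g where "c1 = ?coset f" "c2 = ?coset g" "A_ket f = A_ket g" by (auto simp: the)
    then show "c1 = c2" by (simp add: A_ket_eq_iff cosets_eq)
  qed
  have "(\<lambda>c. the_elem (A_ket ` c)) ` (?coset ` Z) = (\<lambda>f. the_elem (A_ket ` ?coset f)) ` Z"
    by (rule image_image)
  also have "\<dots> = A_ket ` Z" by (simp only: the)
  finally show ?thesis using inj by (simp add: bij_betw_def cohomology0_def)
qed

end

theorem proposition5:
  fixes X :: "'x set" and deg :: "'x \<Rightarrow> int" and dC :: "'x \<Rightarrow> 'x \<Rightarrow> int"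
    and Gc :: "int \<Rightarrow> 'g::ab_group_add set" and dG :: "int \<Rightarrow> 'g \<Rightarrow> 'g"
  assumes "chain_complex_C X deg dC"
    and "chain_complex_G Gc dG"
  shows "\<not> module.dependent cscale ((\<lambda>f. A_total X deg dC Gc dG (ket f)) ` cocycles0 X deg dC Gc dG)
         \<and> module.span cscale ((\<lambda>f. A_total X deg dC Gc dG (ket f)) ` cocycles0 X deg dC Gc dG)
             = ground_space X deg dC Gc dG
         \<and> (\<forall>f\<in>cocycles0 X deg dC Gc dG. \<forall>g\<in>cocycles0 X deg dC Gc dG.
               A_total X deg dC Gc dG (ket f) = A_total X deg dC Gc dG (ket g)
                \<longleftrightarrow> (\<lambda>x. f x - g x) \<in> coboundaries0 X deg dC Gc dG)
         \<and> bij_betw (\<lambda>c. the_elem ((\<lambda>f. A_total X deg dC Gc dG (ket f)) ` c))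
             (cohomology0 X deg dC Gc dG)
             ((\<lambda>f. A_total X deg dC Gc dG (ket f)) ` cocycles0 X deg dC Gc dG)"
proof -
  interpret chain_complexes X deg dC Gc dG
    using assms by unfold_locales
  show ?thesis
    using A_ket_independent span_A_ket ground_space_eq A_ket_eq_iff bij_cohomology0_A_ket
    by simp
qed

end
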